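(* Let $\mathcal H_A,\mathcal H_B$ be Hilbert spaces of dimension $N$, let $\rho_{AB}$ be a density operator on $\mathcal H_A\otimes\mathcal H_B$, and let $X$ be a projective measurement on $A$ given by an orthonormal basis $\{|x_i\rangle\}_{i=1}^N$ of $\mathcal H_A$. For every projective measurement $X'$ on $B$, given by an orthonormal basis $\{|x'_\mu\rangle\}_{\mu=1}^N$ of $\mathcal H_B$, let $\vec p(x|x')\in\mathbb R^N$ be the majorized marginal distribution defined in the context. Then there exists a unique least upper bound $\vec s^{\,(x)}$, with respect to the majorization order, of the set $\{\vec p(x|x') : X'\}$; in particular $\vec p(x|x')\prec \vec s^{\,(x)}$ for all $X'$. Moreover $\vec s^{\,(x)}$ depends only on $X$ and $\rho_{AB}$ and is given by $$\vec s^{\,(x)}=\vec p(x|x'^{(1)})\vee \vec p(x|x'^{(2)})\vee\cdots\vee \vec p(x|x'^{(N)}),$$ where for each $k\in\{1,\dots,N\}$, $X'^{(k)}$ is a measurement on $B$ for which $\sum_{i=1}^k p_i(x|x'^{(k)})=\max_{X'}\sum_{i=1}^k p_i(x|x')$ (components listed in descending order).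
   Context: Joint distribution: $P_{i\mu}(X,X')=\langle x_i|\otimes\langle x'_\mu|\,\rho_{AB}\,|x_i\rangle\otimes|x'_\mu\rangle$. For each $\mu$, let $\vec p^{\,(\mu)}(x)=(P_{1\mu},\dots,P_{N\mu})$ and let $\vec p^{\,(\mu)\downarrow}(x)$ denote this vector with components rearranged in descending order. The majorized marginal distribution is $\vec p(x|x')=\sum_{\mu=1}^N \vec p^{\,(\mu)\downarrow}(x)$ (a probability vector with components in descending order). Majorization: for $\vec a,\vec b\in\mathbb R^N$ with components sorted in descending order, $\vec a\prec\vec b$ means $\sum_{i=1}^k a_i\le\sum_{i=1}^k b_i$ for all $k=1,\dots,N$, with equality for $k=N$. On the set of descending-ordered probability vectors, $\prec$ is a lattice order, and $\vec a\vee\vec b$ denotes the join (least upper bound) of $\vec a$ and $\vec b$ in this majorization lattice. *)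

theory Defs
  imports Complex_Main
begin

text \<open>Vectors of \<open>C^N\<close> are functions \<open>nat \<Rightarrow> complex\<close> (components indexed by \<open>0..<N\<close>).
  Operators on \<open>C^N \<otimes> C^N\<close> are functions \<open>nat \<Rightarrow> nat \<Rightarrow> complex\<close> indexed by \<open>0..<N*N\<close>,
  where the product basis vector \<open>|a> \<otimes> |b>\<close> has index \<open>a*N + b\<close>.\<close>

definition cinner :: "nat \<Rightarrow> (nat \<Rightarrow> complex) \<Rightarrow> (nat \<Rightarrow> complex) \<Rightarrow> complex" where
  "cinner N u v = (\<Sum>a<N. cnj (u a) * v a)"

text \<open>An orthonormal basis \<open>{|x_i>}_{i<N}\<close> of \<open>C^N\<close>; \<open>x i a\<close> is the a-th component of \<open>|x_i>\<close>.
  (N orthonormal vectors in an N-dimensional space automatically form a basis.)\<close>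
definition onb :: "nat \<Rightarrow> (nat \<Rightarrow> nat \<Rightarrow> complex) \<Rightarrow> bool" where
  "onb N x \<longleftrightarrow> (\<forall>i<N. \<forall>j<N. cinner N (x i) (x j) = (if i = j then 1 else 0))"

definition density_op :: "nat \<Rightarrow> (nat \<Rightarrow> nat \<Rightarrow> complex) \<Rightarrow> bool" where
  "density_op N \<rho> \<longleftrightarrow>
     (\<forall>r<N*N. \<forall>s<N*N. \<rho> r s = cnj (\<rho> s r)) \<and>
     (\<forall>v::nat \<Rightarrow> complex. 0 \<le> Re (\<Sum>r<N*N. \<Sum>s<N*N. cnj (v r) * \<rho> r s * v s)) \<and>
     (\<Sum>r<N*N. \<rho> r r) = 1"

text \<open>Joint distribution \<open>P_{i\<mu>} = (<x_i| \<otimes> <x'_\<mu>|) \<rho> (|x_i> \<otimes> |x'_\<mu>>)\<close> (a real number for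
  a density operator; we take the real part).\<close>
definition joint :: "nat \<Rightarrow> (nat \<Rightarrow> nat \<Rightarrow> complex) \<Rightarrow> (nat \<Rightarrow> nat \<Rightarrow> complex)
    \<Rightarrow> (nat \<Rightarrow> nat \<Rightarrow> complex) \<Rightarrow> nat \<Rightarrow> nat \<Rightarrow> real" where
  "joint N \<rho> x y i \<mu> = Re (\<Sum>a<N. \<Sum>b<N. \<Sum>c<N. \<Sum>d<N.
      cnj (x i a) * cnj (y \<mu> b) * \<rho> (a*N + b) (c*N + d) * x i c * y \<mu> d)"

definition desc :: "nat \<Rightarrow> (nat \<Rightarrow> real) \<Rightarrow> real list" where
  "desc N f = rev (sort (map f [0..<N]))"

definition pcond :: "nat \<Rightarrow> (nat \<Rightarrow> nat \<Rightarrow> complex) \<Rightarrow> (nat \<Rightarrow> nat \<Rightarrow> complex)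
    \<Rightarrow> (nat \<Rightarrow> nat \<Rightarrow> complex) \<Rightarrow> real list" where
  "pcond N \<rho> x y = map (\<lambda>i. \<Sum>\<mu><N. desc N (\<lambda>j. joint N \<rho> x y j \<mu>) ! i) [0..<N]"

text \<open>Majorization \<open>a \<prec> b\<close> (for vectors listed in descending order).\<close>
definition majorized :: "real list \<Rightarrow> real list \<Rightarrow> bool" where
  "majorized a b \<longleftrightarrow> length a = length b \<and>
     (\<forall>k\<le>length a. sum_list (take k a) \<le> sum_list (take k b)) \<and> sum_list a = sum_list b"

definition desc_prob :: "nat \<Rightarrow> real list set" where
  "desc_prob N = {a. length a = N \<and> sorted (rev a) \<and> (\<forall>t\<in>set a. 0 \<le> t) \<and> sum_list a = 1}"

definition maj_lub :: "nat \<Rightarrow> real list set \<Rightarrow> real list \<Rightarrow> bool" where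
  "maj_lub N S s \<longleftrightarrow> s \<in> desc_prob N \<and> (\<forall>a\<in>S. majorized a s) \<and>
     (\<forall>t\<in>desc_prob N. (\<forall>a\<in>S. majorized a t) \<longrightarrow> majorized s t)"

definition maj_join :: "nat \<Rightarrow> real list \<Rightarrow> real list \<Rightarrow> real list" where
  "maj_join N a b = (THE s. maj_lub N {a, b} s)"

end

theory Submission
  imports Defs "HOL-Analysis.Analysis" "HOL-Combinatorics.List_Permutation" "Jordan_Normal_Form.Determinant"
begin

(* A descending probability vector is determined by its partial sums k \<mapsto> p_1 + ... + p_k,
   which form a concave sequence from 0 to 1, and majorization is the pointwise order of
   these sequences. Hence every nonempty set of such vectors has a least upper bound: the
   vector whose partial sums are the least concave majorant of the pointwise supremum of the
   partial sums. For the vectors p(x|x'), the k-th partial sum equals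
   sum_mu max_{|T| = k} sum_{i in T} P_{i mu}, a continuous function of the basis x', so on
   the compact set of orthonormal bases its supremum is attained by some X'^(k). Every upper
   bound of these N vectors then bounds every p(x|x'), so the least upper bound of the whole
   family is the join of the N maximizers. *)

lemma majorized_refl: "majorized a a"
  by (simp add: majorized_def)

lemma majorized_trans: "majorized a b \<Longrightarrow> majorized b c \<Longrightarrow> majorized a c"
  unfolding majorized_def by (metis order_trans)

lemma majorized_antisym:
  assumes "majorized a b" and "majorized b a"
  shows "a = b"
proof -
  have len: "length a = length b" using assms by (simp add: majorized_def)
  have partial: "sum_list (take k a) = sum_list (take k b)" if "k \<le> length a" for k
    using assms that len unfolding majorized_def by (metis order_antisym)
  show ?thesis
  proof (rule nth_equalityI[OF len])
    fix i assume "i < length a"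
    then show "a ! i = b ! i"
      using partial[of i] partial[of "Suc i"] len by (simp add: take_Suc_conv_app_nth)
  qed
qed

lemma majorized_iff_partial_sums:
  assumes "a \<in> desc_prob N" and "b \<in> desc_prob N"
  shows "majorized a b \<longleftrightarrow> (\<forall>k\<le>N. sum_list (take k a) \<le> sum_list (take k b))"
  using assms by (auto simp: majorized_def desc_prob_def)

lemma desc_prob_sum_take_le_1:
  assumes "a \<in> desc_prob N"
  shows "sum_list (take k a) \<le> 1"
proof -
  have "0 \<le> sum_list (drop k a)"
    using assms by (intro sum_list_nonneg) (auto simp: desc_prob_def dest: in_set_dropD)
  moreover have "sum_list (take k a) + sum_list (drop k a) = 1"
    using assms by (simp add: desc_prob_def flip: sum_list_append)
  ultimately show ?thesis by linarith
qed

lemma maj_lub_unique: "maj_lub N S s \<Longrightarrow> maj_lub N S t \<Longrightarrow> s = t"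
  unfolding maj_lub_def by (metis majorized_antisym)

definition concave_seq :: "nat \<Rightarrow> (nat \<Rightarrow> real) \<Rightarrow> bool" where
  "concave_seq N g \<longleftrightarrow> (\<forall>k. k + 2 \<le> N \<longrightarrow> g k + g (k + 2) \<le> 2 * g (k + 1))"

lemma concave_seq_increments_antimono:
  assumes "concave_seq N g" and "i \<le> j" and "j < N"
  shows "g (Suc j) - g j \<le> g (Suc i) - g i"
  using assms(2,3)
proof (induction j rule: dec_induct)
  case (step j)
  have "g j + g (j + 2) \<le> 2 * g (j + 1)"
    using assms(1) step.prems unfolding concave_seq_def by simp
  then show ?case using step by (simp add: numeral_2_eq_2)
qed simp

lemma concave_seq_sum_take:
  assumes "sorted (rev t)" and "length t = N"
  shows "concave_seq N (\<lambda>k. sum_list (take k t))"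
  unfolding concave_seq_def
proof (intro allI impI)
  fix k assume k: "k + 2 \<le> N"
  have "t ! (k + 1) \<le> t ! k"
    using sorted_rev_nth_mono[OF assms(1), of k "k + 1"] k assms(2) by simp
  then show "sum_list (take k t) + sum_list (take (k + 2) t) \<le> 2 * sum_list (take (k + 1) t)"
    using k assms(2) by (simp add: numeral_2_eq_2 take_Suc_conv_app_nth)
qed

lemma sum_list_take_increments:
  assumes "k \<le> N"
  shows "sum_list (take k (map (\<lambda>i. g (Suc i) - g i) [0..<N])) = g k - (g 0 :: real)"
  using assms by (simp add: take_map sum_list_sum_nth atLeast0LessThan sum_lessThan_telescope)

lemma increments_in_desc_prob:
  assumes "concave_seq N g" and "g 0 = 0" and "g N = 1" and "g (N - 1) \<le> 1"
  shows "map (\<lambda>i. g (Suc i) - g i) [0..<N] \<in> desc_prob N"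
proof -
  let ?s = "map (\<lambda>i. g (Suc i) - g i) [0..<N]"
  have "N \<noteq> 0" using assms(2,3) by (metis zero_neq_one)
  have antimono: "?s ! j \<le> ?s ! i" if "i \<le> j" "j < N" for i j
    using concave_seq_increments_antimono[OF assms(1) that] that by simp
  have "sorted (rev ?s)"
    using antimono by (simp add: sorted_rev_iff_nth_mono)
  moreover have "0 \<le> ?s ! i" if "i < N" for i
    using antimono[of i "N - 1"] that \<open>N \<noteq> 0\<close> assms(3,4) by fastforce
  moreover have "sum_list ?s = 1"
    using sum_list_take_increments[of N N g] assms(2,3) by simp
  ultimately show ?thesis by (auto simp: desc_prob_def in_set_conv_nth)
qed

(* Only meaningful when c is bounded above on {..N}: otherwise the INF ranges over the
   empty set. *)
definition concave_majorant :: "nat \<Rightarrow> (nat \<Rightarrow> real) \<Rightarrow> nat \<Rightarrow> real" where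
  "concave_majorant N c k = (INF g \<in> {g. concave_seq N g \<and> (\<forall>j\<le>N. c j \<le> g j)}. g k)"

lemma concave_majorant_least:
  assumes "concave_seq N g" and "\<forall>j\<le>N. c j \<le> g j" and "k \<le> N"
  shows "concave_majorant N c k \<le> g k"
  unfolding concave_majorant_def using assms
  by (intro cINF_lower bdd_belowI[of _ "c k"]) auto

context
  fixes N :: nat and c :: "nat \<Rightarrow> real" and M :: real
  assumes bounded: "\<And>k. k \<le> N \<Longrightarrow> c k \<le> M"
begin

private abbreviation "majorants \<equiv> {g. concave_seq N g \<and> (\<forall>j\<le>N. c j \<le> g j)}"

private lemma const_in_majorants: "(\<lambda>_. M) \<in> majorants"
  using bounded by (simp add: concave_seq_def)

lemma le_concave_majorant:
  assumes "k \<le> N"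
  shows "c k \<le> concave_majorant N c k"
  unfolding concave_majorant_def using assms const_in_majorants
  by (intro cINF_greatest) auto

lemma concave_seq_concave_majorant: "concave_seq N (concave_majorant N c)"
  unfolding concave_seq_def
proof (intro allI impI)
  fix k assume k: "k + 2 \<le> N"
  have "concave_majorant N c k + concave_majorant N c (k + 2) \<le> 2 * g (k + 1)"
    if "g \<in> majorants" for g
  proof -
    have "concave_majorant N c k + concave_majorant N c (k + 2) \<le> g k + g (k + 2)"
      using that k by (intro add_mono concave_majorant_least) auto
    also have "\<dots> \<le> 2 * g (k + 1)" using that k by (simp add: concave_seq_def)
    finally show ?thesis .
  qed
  then have "(concave_majorant N c k + concave_majorant N c (k + 2)) / 2 \<le> concave_majorant N c (k + 1)"
    unfolding concave_majorant_def[of N c "k + 1"] using const_in_majorants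
    by (intro cINF_greatest) (auto simp: field_simps)
  then show "concave_majorant N c k + concave_majorant N c (k + 2) \<le> 2 * concave_majorant N c (k + 1)"
    by simp
qed

end

lemma concave_majorant_endpoints:
  assumes "c 0 = 0" and "c N = 1" and "\<And>k. c k \<le> 1"
  shows "concave_majorant N c 0 = 0" and "concave_majorant N c N = 1"
    and "k \<le> N \<Longrightarrow> concave_majorant N c k \<le> 1"
proof -
  have le_1: "concave_majorant N c k \<le> 1" if "k \<le> N" for k
    using concave_majorant_least[where N = N and c = c and g = "\<lambda>_. 1"] assms(3) that by (simp add: concave_seq_def)
  then show "k \<le> N \<Longrightarrow> concave_majorant N c k \<le> 1" .
  show "concave_majorant N c 0 = 0"
    using concave_majorant_least[where N = N and c = c and g = "\<lambda>k. if k = 0 then 0 else 1" and k = 0]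
      le_concave_majorant[where N = N and c = c and M = 1 and k = 0] assms
    by (simp add: concave_seq_def)
  show "concave_majorant N c N = 1"
    using le_concave_majorant[where N = N and c = c and M = 1 and k = N] le_1[of N] assms by simp
qed

lemma maj_lub_exists:
  assumes "S \<noteq> {}" and "S \<subseteq> desc_prob N"
  shows "\<exists>s. maj_lub N S s"
proof -
  define c where "c k = (SUP a \<in> S. sum_list (take k a))" for k
  define h where "h = concave_majorant N c"
  define s where "s = map (\<lambda>i. h (Suc i) - h i) [0..<N]"
  have le_c: "sum_list (take k a) \<le> c k" if "a \<in> S" for a k
    unfolding c_def using that assms(2) desc_prob_sum_take_le_1
    by (intro cSUP_upper bdd_aboveI[of _ 1]) auto
  have c_le: "c k \<le> T" if "\<And>a. a \<in> S \<Longrightarrow> sum_list (take k a) \<le> T" for k T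
    unfolding c_def using assms(1) that by (intro cSUP_least) auto
  have c_le_1: "c k \<le> 1" for k
    using c_le assms(2) desc_prob_sum_take_le_1 by blast
  have "c 0 = 0" using assms(1) by (simp add: c_def)
  obtain a0 where "a0 \<in> S" using assms(1) by blast
  then have "c N = 1"
    using le_c[of a0 N] c_le_1[of N] assms(2) by (auto simp: desc_prob_def)
  note h_endpoints = concave_majorant_endpoints[OF \<open>c 0 = 0\<close> \<open>c N = 1\<close> c_le_1, folded h_def]
  have partial_s: "sum_list (take k s) = h k" if "k \<le> N" for k
    using sum_list_take_increments[OF that] h_endpoints(1) by (simp add: s_def)
  have s_desc: "s \<in> desc_prob N"
    unfolding s_def h_def using h_endpoints[unfolded h_def]
    by (intro increments_in_desc_prob concave_seq_concave_majorant[of N c 1] c_le_1) auto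
  have "majorized a s" if "a \<in> S" for a
    using that assms(2) s_desc partial_s order_trans[OF le_c le_concave_majorant[of N c 1, OF c_le_1]]
    by (subst majorized_iff_partial_sums) (auto simp: h_def)
  moreover have "majorized s t" if t: "t \<in> desc_prob N" and ub: "\<forall>a\<in>S. majorized a t" for t
  proof -
    have "c k \<le> sum_list (take k t)" if "k \<le> N" for k
      using c_le ub t assms(2) that by (meson majorized_iff_partial_sums subsetD)
    moreover have "concave_seq N (\<lambda>k. sum_list (take k t))"
      using t by (simp add: concave_seq_sum_take desc_prob_def)
    ultimately have "h k \<le> sum_list (take k t)" if "k \<le> N" for k
      unfolding h_def using concave_majorant_least that by blast
    then show ?thesis
      using s_desc t partial_s by (simp add: majorized_iff_partial_sums)
  qed
  ultimately show ?thesis using s_desc unfolding maj_lub_def by blast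
qed

lemma maj_lub_maj_join:
  assumes "a \<in> desc_prob N" and "b \<in> desc_prob N"
  shows "maj_lub N {a, b} (maj_join N a b)"
proof -
  obtain s where "maj_lub N {a, b} s" using maj_lub_exists[of "{a, b}" N] assms by auto
  then have "\<exists>!s. maj_lub N {a, b} s" using maj_lub_unique by blast
  then show ?thesis unfolding maj_join_def by (rule theI')
qed

lemma maj_lub_insert:
  assumes "maj_lub N A s" and "maj_lub N {s, b} j"
  shows "maj_lub N (insert b A) j"
  unfolding maj_lub_def
proof (intro conjI ballI impI)
  show "j \<in> desc_prob N" using assms(2) by (simp add: maj_lub_def)
  fix a assume "a \<in> insert b A"
  then show "majorized a j"
    using assms majorized_trans unfolding maj_lub_def by blast
next
  fix t assume "t \<in> desc_prob N" and "\<forall>a\<in>insert b A. majorized a t"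
  then show "majorized j t" using assms unfolding maj_lub_def by simp
qed

lemma maj_lub_foldl_maj_join:
  assumes "a \<in> desc_prob N" and "set bs \<subseteq> desc_prob N"
  shows "maj_lub N (insert a (set bs)) (foldl (maj_join N) a bs)"
  using assms(2)
proof (induction bs rule: rev_induct)
  case Nil
  then show ?case using assms(1) by (simp add: maj_lub_def majorized_refl)
next
  case (snoc b bs)
  define r where "r = foldl (maj_join N) a bs"
  have lub_r: "maj_lub N (insert a (set bs)) r" using snoc by (simp add: r_def)
  then have "maj_lub N {r, b} (maj_join N r b)"
    using snoc.prems by (intro maj_lub_maj_join) (auto simp: maj_lub_def)
  from maj_lub_insert[OF lub_r this] show ?case by (simp add: r_def insert_commute)
qed

lemma maj_lub_dominating_subset:
  assumes "maj_lub N S s" and "F \<subseteq> S" and "S \<subseteq> desc_prob N"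
    and dominating: "\<And>a k. a \<in> S \<Longrightarrow> k \<in> {1..N} \<Longrightarrow>
      \<exists>b\<in>F. sum_list (take k a) \<le> sum_list (take k b)"
  shows "maj_lub N F s"
  unfolding maj_lub_def
proof (intro conjI ballI impI)
  show "s \<in> desc_prob N" "\<And>a. a \<in> F \<Longrightarrow> majorized a s"
    using assms(1,2) by (auto simp: maj_lub_def)
  fix t assume t: "t \<in> desc_prob N" and ub: "\<forall>b\<in>F. majorized b t"
  have "majorized a t" if "a \<in> S" for a
  proof -
    have partial: "sum_list (take k a) \<le> sum_list (take k t)" if k: "k \<in> {1..N}" for k
    proof -
      obtain b where "b \<in> F" and "sum_list (take k a) \<le> sum_list (take k b)"
        using dominating[OF \<open>a \<in> S\<close> k] by blast
      moreover have "sum_list (take k b) \<le> sum_list (take k t)"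
        using \<open>b \<in> F\<close> ub t assms(2,3) k majorized_iff_partial_sums[of b N t] by auto
      ultimately show ?thesis by linarith
    qed
    have "\<forall>k\<le>N. sum_list (take k a) \<le> sum_list (take k t)"
    proof (intro allI impI)
      fix k assume "k \<le> N"
      show "sum_list (take k a) \<le> sum_list (take k t)"
        using partial[of k] \<open>k \<le> N\<close> by (cases "k = 0") simp_all
    qed
    moreover have "a \<in> desc_prob N" using \<open>a \<in> S\<close> assms(3) by blast
    ultimately show ?thesis using t by (simp add: majorized_iff_partial_sums)
  qed
  then show "majorized s t" using assms(1) t by (simp add: maj_lub_def)
qed

lemma maj_lub_eq_foldl_maj_join:
  assumes "maj_lub N S s" and "S \<subseteq> desc_prob N" and "0 < N"
    and "\<And>k. k \<in> {1..N} \<Longrightarrow> b k \<in> S"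
    and "\<And>a k. a \<in> S \<Longrightarrow> k \<in> {1..N} \<Longrightarrow> sum_list (take k a) \<le> sum_list (take k (b k))"
  shows "s = foldl (maj_join N) (b 1) (map b [2..<N+1])"
proof -
  have "{1..N} = insert 1 {2..<N+1}" using assms(3) by auto
  then have image_eq: "b ` {1..N} = insert (b 1) (set (map b [2..<N+1]))"
    by (simp only: image_insert set_map set_upt)
  have "maj_lub N (b ` {1..N}) s"
  proof (rule maj_lub_dominating_subset[OF assms(1) _ assms(2)])
    show "b ` {1..N} \<subseteq> S" using assms(4) by blast
    fix a k assume "a \<in> S" and "k \<in> {1..N}"
    then show "\<exists>c\<in>b ` {1..N}. sum_list (take k a) \<le> sum_list (take k c)"
      using assms(5) by blast
  qed
  moreover have "maj_lub N (b ` {1..N}) (foldl (maj_join N) (b 1) (map b [2..<N+1]))"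
  proof -
    have "insert (b 1) (set (map b [2..<N+1])) \<subseteq> desc_prob N"
      unfolding image_eq[symmetric] using assms(2,4) by blast
    then show ?thesis unfolding image_eq by (intro maj_lub_foldl_maj_join) auto
  qed
  ultimately show ?thesis by (rule maj_lub_unique)
qed

lemma onb_columns_orthonormal:
  assumes "onb N x" and "a < N" and "c < N"
  shows "(\<Sum>i<N. cnj (x i a) * x i c) = (if a = c then 1 else 0)"
proof -
  define A where "A = mat N N (\<lambda>(i, a). cnj (x i a))"
  define B where "B = mat N N (\<lambda>(a, i). x i a)"
  have "A * B = 1\<^sub>m N"
    using assms(1) by (intro eq_matI) (auto simp: A_def B_def scalar_prod_def onb_def cinner_def atLeast0LessThan)
  then have "B * A = 1\<^sub>m N"
    by (intro mat_mult_left_right_inverse[of A N B]) (auto simp: A_def B_def)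
  then have "(B * A) $$ (c, a) = 1\<^sub>m N $$ (c, a)" by simp
  then show ?thesis
    using assms(2,3) by (auto simp: A_def B_def scalar_prod_def atLeast0LessThan mult.commute)
qed

definition tensor :: "nat \<Rightarrow> (nat \<Rightarrow> complex) \<Rightarrow> (nat \<Rightarrow> complex) \<Rightarrow> nat \<Rightarrow> complex" where
  "tensor N u v r = u (r div N) * v (r mod N)"

lemma joint_eq_quadratic_form:
  "joint N \<rho> x y i \<mu> =
    Re (\<Sum>r<N*N. \<Sum>s<N*N. cnj (tensor N (x i) (y \<mu>) r) * \<rho> r s * tensor N (x i) (y \<mu>) s)"
  unfolding joint_def tensor_def sum_mult_product
  by (intro arg_cong[where f = Re] sum.cong refl) (simp add: add.commute mult_ac)

lemma tensor_onb_complete: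
  assumes "onb N x" and "onb N y" and "r < N * N" and "s < N * N"
  shows "(\<Sum>i<N. \<Sum>\<mu><N. cnj (tensor N (x i) (y \<mu>) r) * tensor N (x i) (y \<mu>) s)
    = (if r = s then 1 else 0)"
proof -
  have "0 < N" using assms(3) by (cases N) auto
  then have div: "r div N < N" "s div N < N" and mod: "r mod N < N" "s mod N < N"
    using assms(3,4) by (auto simp: less_mult_imp_div_less)
  have "(\<Sum>i<N. \<Sum>\<mu><N. cnj (tensor N (x i) (y \<mu>) r) * tensor N (x i) (y \<mu>) s)
      = (\<Sum>i<N. cnj (x i (r div N)) * x i (s div N)) * (\<Sum>\<mu><N. cnj (y \<mu> (r mod N)) * y \<mu> (s mod N))"
    by (simp add: tensor_def sum_product mult_ac)
  also have "\<dots> = (if r = s then 1 else 0)"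
    using div mod by (simp add: onb_columns_orthonormal[OF assms(1)] onb_columns_orthonormal[OF assms(2)])
       (metis div_mult_mod_eq)
  finally show ?thesis .
qed

lemma joint_nonneg:
  assumes "density_op N \<rho>"
  shows "0 \<le> joint N \<rho> x y i \<mu>"
  using assms unfolding density_op_def joint_eq_quadratic_form by blast

lemma joint_sum_eq_1:
  assumes "density_op N \<rho>" and "onb N x" and "onb N y"
  shows "(\<Sum>i<N. \<Sum>\<mu><N. joint N \<rho> x y i \<mu>) = 1"
proof -
  let ?v = "\<lambda>i \<mu>. tensor N (x i) (y \<mu>)"
  have swap: "(\<Sum>i\<in>A. \<Sum>j\<in>B. \<Sum>r\<in>C. \<Sum>s\<in>D. F i j r s) = (\<Sum>r\<in>C. \<Sum>s\<in>D. \<Sum>i\<in>A. \<Sum>j\<in>B. F i j r s)"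
    for A B C D and F :: "nat \<Rightarrow> nat \<Rightarrow> nat \<Rightarrow> nat \<Rightarrow> complex"
    by (simp only: sum.swap[of _ A]) (simp only: sum.swap[of _ B])
  have trace: "(\<Sum>r<N*N. \<rho> r r) = 1" using assms(1) unfolding density_op_def by blast
  have "(\<Sum>i<N. \<Sum>\<mu><N. joint N \<rho> x y i \<mu>)
      = Re (\<Sum>i<N. \<Sum>\<mu><N. \<Sum>r<N*N. \<Sum>s<N*N. cnj (?v i \<mu> r) * \<rho> r s * ?v i \<mu> s)"
    by (simp only: joint_eq_quadratic_form Re_sum)
  also have "\<dots> = Re (\<Sum>r<N*N. \<Sum>s<N*N. \<rho> r s * (\<Sum>i<N. \<Sum>\<mu><N. cnj (?v i \<mu> r) * ?v i \<mu> s))"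
    by (subst swap) (simp add: sum_distrib_left mult_ac)
  also have "\<dots> = Re (\<Sum>r<N*N. \<Sum>s<N*N. \<rho> r s * (if r = s then 1 else 0))"
    using assms(2,3) by (intro arg_cong[where f = Re] sum.cong refl) (simp add: tensor_onb_complete)
  also have "\<dots> = 1"
    by (simp add: if_distrib[of "times _"] trace cong: if_cong)
  finally show ?thesis .
qed

lemma length_desc [simp]: "length (desc N v) = N"
  by (simp add: desc_def)

lemma desc_antimono:
  assumes "i \<le> j" and "j < N"
  shows "desc N v ! j \<le> desc N v ! i"
  using assms by (intro sorted_rev_nth_mono) (auto simp: desc_def)

lemma desc_permutation:
  obtains f where "bij_betw f {..<N} {..<N}" and "\<And>i. i < N \<Longrightarrow> desc N v ! i = v (f i)"
proof -
  have "mset (desc N v) = mset (map v [0..<N])" by (simp add: desc_def)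
  from permutation_Ex_bij[OF this] obtain f where
    f: "bij_betw f {..<N} {..<N}" and nth: "\<And>i. i < N \<Longrightarrow> desc N v ! i = map v [0..<N] ! f i"
    by auto
  have "desc N v ! i = v (f i)" if "i < N" for i
    using nth[OF that] bij_betwE[OF f] that by simp
  with f show thesis using that by blast
qed

lemma sum_le_sum_lessThan_card:
  fixes g :: "nat \<Rightarrow> real"
  assumes antimono: "\<And>i j. i \<le> j \<Longrightarrow> j < N \<Longrightarrow> g j \<le> g i" and "U \<subseteq> {..<N}"
  shows "sum g U \<le> sum g {..<card U}"
proof -
  let ?K = "{..<card U}"
  have "finite U" using assms(2) finite_subset by blast
  have "card (U - ?K) = card (?K - U)"
    using \<open>finite U\<close> by (simp add: card_Diff_subset_Int Int_commute)
  then obtain h where h: "bij_betw h (U - ?K) (?K - U)"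
    using \<open>finite U\<close> by (metis finite_Diff finite_lessThan finite_same_card_bij)
  have "sum g (U - ?K) \<le> sum (g \<circ> h) (U - ?K)"
  proof (rule sum_mono)
    fix a assume a: "a \<in> U - ?K"
    then have "h a < card U" "card U \<le> a" "a < N"
      using bij_betwE[OF h] assms(2) by auto
    then show "g a \<le> (g \<circ> h) a" using antimono[of "h a" a] by simp
  qed
  also have "\<dots> = sum g (?K - U)" using sum.reindex_bij_betw[OF h] by simp
  finally show ?thesis
    using sum.Int_Diff[OF \<open>finite U\<close>, of g ?K] sum.Int_Diff[of ?K g U]
    by (simp add: Int_commute)
qed

definition subsets_of_card :: "nat \<Rightarrow> nat \<Rightarrow> nat set set" where
  "subsets_of_card N k = {T. T \<subseteq> {..<N} \<and> card T = k}"

lemma finite_subsets_of_card: "finite (subsets_of_card N k)"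
  unfolding subsets_of_card_def by (rule finite_subset[of _ "Pow {..<N}"]) auto

lemma subsets_of_card_nonempty: "k \<le> N \<Longrightarrow> subsets_of_card N k \<noteq> {}"
proof -
  assume "k \<le> N"
  then have "{..<k} \<in> subsets_of_card N k" by (auto simp: subsets_of_card_def)
  then show ?thesis by blast
qed

lemma sum_take_desc_eq_Max:
  assumes "k \<le> N"
  shows "(\<Sum>i<k. desc N v ! i) = Max ((\<lambda>T. \<Sum>j\<in>T. v j) ` subsets_of_card N k)"
proof -
  obtain f where f: "bij_betw f {..<N} {..<N}" and desc_f: "\<And>i. i < N \<Longrightarrow> desc N v ! i = v (f i)"
    using desc_permutation by blast
  have inj: "inj_on f {..<k}"
    using f assms by (auto simp: bij_betw_def intro: inj_on_subset)
  have attained: "f ` {..<k} \<in> subsets_of_card N k"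
    using f assms inj by (auto simp: subsets_of_card_def card_image dest: bij_betwE)
  have "(\<Sum>i<k. desc N v ! i) = (\<Sum>j\<in>f ` {..<k}. v j)"
    using inj assms desc_f by (simp add: sum.reindex)
  then have "(\<Sum>i<k. desc N v ! i) \<in> (\<lambda>T. \<Sum>j\<in>T. v j) ` subsets_of_card N k"
    using attained by blast
  moreover have "(\<Sum>j\<in>T. v j) \<le> (\<Sum>i<k. desc N v ! i)" if "T \<in> subsets_of_card N k" for T
  proof -
    define U where "U = {i \<in> {..<N}. f i \<in> T}"
    have "f ` U = T" and "inj_on f U"
      using that f by (auto simp: U_def subsets_of_card_def bij_betw_def intro: inj_on_subset)
    then have "card U = k" using that by (auto simp: subsets_of_card_def card_image)
    have "(\<Sum>j\<in>T. v j) = (\<Sum>i\<in>U. v (f i))"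
      using \<open>f ` U = T\<close> \<open>inj_on f U\<close> by (metis sum.reindex_cong)
    also have "\<dots> = (\<Sum>i\<in>U. desc N v ! i)" using desc_f by (simp add: U_def)
    also have "\<dots> \<le> (\<Sum>i<k. desc N v ! i)"
      using sum_le_sum_lessThan_card[of N "\<lambda>i. desc N v ! i" U] desc_antimono \<open>card U = k\<close>
      by (auto simp: U_def)
    finally show ?thesis .
  qed
  ultimately show ?thesis
    using finite_subsets_of_card by (intro Max_eqI[symmetric]) auto
qed

lemma length_pcond [simp]: "length (pcond N \<rho> x y) = N"
  by (simp add: pcond_def)

lemma sum_take_pcond:
  assumes "k \<le> N"
  shows "sum_list (take k (pcond N \<rho> x y)) = (\<Sum>\<mu><N. \<Sum>i<k. desc N (\<lambda>j. joint N \<rho> x y j \<mu>) ! i)"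
  using assms
  by (simp add: pcond_def take_map sum_list_sum_nth atLeast0LessThan sum.swap[of _ "{..<k}"])

lemma sum_take_pcond_eq_Max:
  assumes "k \<le> N"
  shows "sum_list (take k (pcond N \<rho> x y))
    = (\<Sum>\<mu><N. Max ((\<lambda>T. \<Sum>j\<in>T. joint N \<rho> x y j \<mu>) ` subsets_of_card N k))"
  using assms by (simp add: sum_take_pcond sum_take_desc_eq_Max)

lemma pcond_in_desc_prob:
  assumes "density_op N \<rho>" and "onb N x" and "onb N y"
  shows "pcond N \<rho> x y \<in> desc_prob N"
proof -
  let ?p = "pcond N \<rho> x y" and ?col = "\<lambda>\<mu> j. joint N \<rho> x y j \<mu>"
  have sorted: "sorted (rev ?p)"
    by (auto simp: sorted_rev_iff_nth_mono pcond_def intro!: sum_mono desc_antimono)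
  have "0 \<le> desc N (?col \<mu>) ! i" if "i < N" for i \<mu>
    using desc_permutation[of N "?col \<mu>"] joint_nonneg[OF assms(1)] that by metis
  then have nonneg: "\<forall>t\<in>set ?p. 0 \<le> t"
    by (auto simp: pcond_def intro!: sum_nonneg)
  have sum_desc: "(\<Sum>i<N. desc N (?col \<mu>) ! i) = (\<Sum>j<N. ?col \<mu> j)" for \<mu>
  proof -
    obtain f where f: "bij_betw f {..<N} {..<N}" and "\<And>i. i < N \<Longrightarrow> desc N (?col \<mu>) ! i = ?col \<mu> (f i)"
      using desc_permutation by blast
    then show ?thesis using sum.reindex_bij_betw[OF f, of "?col \<mu>"] by simp
  qed
  have "sum_list ?p = (\<Sum>\<mu><N. \<Sum>j<N. joint N \<rho> x y j \<mu>)"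
    using sum_take_pcond[of N N] by (simp add: sum_desc)
  also have "\<dots> = 1"
    using joint_sum_eq_1[OF assms] sum.swap[of "\<lambda>j \<mu>. joint N \<rho> x y j \<mu>" "{..<N}" "{..<N}"] by simp
  finally show ?thesis using sorted nonneg by (simp add: desc_prob_def)
qed

lemma continuous_on_Max:
  assumes "finite I" and "I \<noteq> {}" and "\<And>T. T \<in> I \<Longrightarrow> continuous_on S (f T)"
  shows "continuous_on S (\<lambda>y. Max ((\<lambda>T. f T y :: real) ` I))"
  using assms
proof (induction I rule: finite_ne_induct)
  case (insert T I)
  then have "continuous_on S (\<lambda>y. max (f T y) (Max ((\<lambda>T. f T y) ` I)))"
    by (intro continuous_intros) auto
  then show ?case using insert by simp
qed simp

lemma continuous_on_entry: "continuous_on S (\<lambda>y :: nat \<Rightarrow> nat \<Rightarrow> complex. y i a)"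
proof -
  have "continuous_on S (\<lambda>y :: nat \<Rightarrow> nat \<Rightarrow> complex. y i)"
    using continuous_on_product_then_coordinatewise[OF continuous_on_id] .
  then show ?thesis by (rule continuous_on_product_then_coordinatewise)
qed

lemma continuous_on_joint: "continuous_on S (\<lambda>y. joint N \<rho> x y i \<mu>)"
  unfolding joint_def by (intro continuous_intros continuous_on_entry)

lemma continuous_on_sum_take_pcond:
  assumes "k \<le> N"
  shows "continuous_on S (\<lambda>y. sum_list (take k (pcond N \<rho> x y)))"
  unfolding sum_take_pcond_eq_Max[OF assms]
  by (intro continuous_on_sum continuous_on_Max finite_subsets_of_card
      subsets_of_card_nonempty[OF assms] continuous_on_joint)

(* onb N y constrains only the entries y i a with i, a < N, so the set of all orthonormal
   bases is unbounded; zeroing the remaining entries changes no pcond and yields a compact set. *)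
definition truncate :: "nat \<Rightarrow> (nat \<Rightarrow> nat \<Rightarrow> complex) \<Rightarrow> nat \<Rightarrow> nat \<Rightarrow> complex" where
  "truncate N y i a = (if i < N \<and> a < N then y i a else 0)"

definition truncated_onbs :: "nat \<Rightarrow> (nat \<Rightarrow> nat \<Rightarrow> complex) set" where
  "truncated_onbs N = {y. onb N y \<and> (\<forall>i a. \<not> (i < N \<and> a < N) \<longrightarrow> y i a = 0)}"

lemma onb_truncate_iff: "onb N (truncate N y) \<longleftrightarrow> onb N y"
proof -
  have "cinner N (truncate N y i) (truncate N y j) = cinner N (y i) (y j)" if "i < N" "j < N" for i j
    unfolding cinner_def using that by (intro sum.cong refl) (simp add: truncate_def)
  then show ?thesis unfolding onb_def by auto
qed

lemma truncate_in_truncated_onbs: "onb N y \<Longrightarrow> truncate N y \<in> truncated_onbs N"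
  by (simp add: truncated_onbs_def onb_truncate_iff truncate_def)

lemma pcond_truncate: "pcond N \<rho> x (truncate N y) = pcond N \<rho> x y"
proof -
  have "joint N \<rho> x (truncate N y) j \<mu> = joint N \<rho> x y j \<mu>" if "\<mu> < N" for j \<mu>
    unfolding joint_def using that by (intro arg_cong[where f = Re] sum.cong refl) (simp add: truncate_def)
  then show ?thesis unfolding pcond_def by (intro map_cong refl sum.cong) auto
qed

lemma onb_norm_le_1:
  assumes "onb N y" and "i < N" and "a < N"
  shows "norm (y i a) \<le> 1"
proof -
  have "cnj (y i b) * y i b = complex_of_real ((norm (y i b))\<^sup>2)" for b
    using complex_norm_square[of "y i b"] by (metis mult.commute)
  moreover have "(\<Sum>b<N. cnj (y i b) * y i b) = 1"
    using assms unfolding onb_def cinner_def by auto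
  ultimately have "(\<Sum>b<N. (norm (y i b))\<^sup>2) = 1"
    by (metis (no_types, lifting) of_real_eq_1_iff of_real_sum sum.cong)
  moreover have "(norm (y i a))\<^sup>2 \<le> (\<Sum>b<N. (norm (y i b))\<^sup>2)"
    using assms(3) by (intro member_le_sum) auto
  ultimately show ?thesis by (simp add: power_le_one_iff abs_le_square_iff)
qed

lemma compact_PiE_UNIV:
  assumes "\<And>i. compact (S i)"
  shows "compact (PiE UNIV S)"
  using assms compactin_PiE[of "\<lambda>_. euclidean" UNIV S] by (simp add: euclidean_product_topology)

lemma compact_truncated_onbs: "compact (truncated_onbs N)"
proof -
  let ?box = "PiE UNIV (\<lambda>_ :: nat. PiE UNIV (\<lambda>_ :: nat. cball (0 :: complex) 1))"
  have "truncated_onbs N \<subseteq> ?box"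
  proof
    fix y assume y: "y \<in> truncated_onbs N"
    have "norm (y i a) \<le> 1" for i a
      using y onb_norm_le_1[of N y i a] by (cases "i < N \<and> a < N") (auto simp: truncated_onbs_def)
    then show "y \<in> ?box" by (simp add: PiE_iff)
  qed
  moreover have "closed (truncated_onbs N)"
  proof -
    have "truncated_onbs N = (\<Inter>i<N. \<Inter>j<N. {y. cinner N (y i) (y j) = (if i = j then 1 else 0)})
        \<inter> (\<Inter>p \<in> {p. \<not> (fst p < N \<and> snd p < N)}. {y. y (fst p) (snd p) = 0})"
      by (auto simp: truncated_onbs_def onb_def)
    then show ?thesis
      by (simp only:) (intro closed_Int closed_INT ballI closed_Collect_eq continuous_intros;
          simp add: cinner_def; intro continuous_intros continuous_on_entry)
  qed
  moreover have "compact ?box" by (intro compact_PiE_UNIV compact_cball)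
  ultimately show ?thesis using compact_Int_closed[of ?box] by (metis Int_absorb1)
qed

lemma onb_standard_basis: "onb N (\<lambda>i a. if i = a then 1 else 0)"
proof -
  have "cinner N (\<lambda>a. if i = a then 1 else 0) (\<lambda>a. if j = a then 1 else 0)
      = (\<Sum>a<N. if a = i \<and> i = j then 1 else 0)" for i j
    unfolding cinner_def by (intro sum.cong refl) auto
  then show ?thesis unfolding onb_def by (auto simp: sum.delta)
qed

lemma truncated_onbs_nonempty: "truncated_onbs N \<noteq> {}"
  using truncate_in_truncated_onbs[OF onb_standard_basis] by blast

lemma sum_take_pcond_maximizer:
  assumes "k \<le> N"
  obtains b where "onb N b"
    and "\<And>y. onb N y \<Longrightarrow> sum_list (take k (pcond N \<rho> x y)) \<le> sum_list (take k (pcond N \<rho> x b))"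
proof -
  obtain b where b: "b \<in> truncated_onbs N"
    and max: "\<forall>y \<in> truncated_onbs N. sum_list (take k (pcond N \<rho> x y)) \<le> sum_list (take k (pcond N \<rho> x b))"
    using continuous_attains_sup[OF compact_truncated_onbs truncated_onbs_nonempty
        continuous_on_sum_take_pcond[OF assms]] by blast
  show thesis
  proof (rule that)
    show "onb N b" using b by (simp add: truncated_onbs_def)
    fix y assume "onb N y"
    then have y: "truncate N y \<in> truncated_onbs N" by (rule truncate_in_truncated_onbs)
    show "sum_list (take k (pcond N \<rho> x y)) \<le> sum_list (take k (pcond N \<rho> x b))"
      using max[rule_format, OF y] unfolding pcond_truncate .
  qed
qed

theorem proposition1:
  fixes N :: nat and \<rho> x :: "nat \<Rightarrow> nat \<Rightarrow> complex"
  assumes "0 < N" and "density_op N \<rho>" and "onb N x"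
  shows "(\<exists>!s. maj_lub N {pcond N \<rho> x y | y. onb N y} s)
    \<and> (\<exists>B. \<forall>k\<in>{1..N}. onb N (B k) \<and>
           (\<forall>y. onb N y \<longrightarrow> sum_list (take k (pcond N \<rho> x y)) \<le> sum_list (take k (pcond N \<rho> x (B k)))))
    \<and> (\<forall>B s. (\<forall>k\<in>{1..N}. onb N (B k) \<and>
           (\<forall>y. onb N y \<longrightarrow> sum_list (take k (pcond N \<rho> x y)) \<le> sum_list (take k (pcond N \<rho> x (B k)))))
         \<longrightarrow> maj_lub N {pcond N \<rho> x y | y. onb N y} s
         \<longrightarrow> s = foldl (maj_join N) (pcond N \<rho> x (B 1)) (map (\<lambda>k. pcond N \<rho> x (B k)) [2..<N+1]))"
proof -
  define S where "S = {pcond N \<rho> x y | y. onb N y}"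
  have S_desc: "S \<subseteq> desc_prob N"
    using pcond_in_desc_prob[OF assms(2,3)] by (auto simp: S_def)
  have "S \<noteq> {}" using onb_standard_basis by (auto simp: S_def)
  have "\<exists>!s. maj_lub N S s"
    using maj_lub_exists[OF \<open>S \<noteq> {}\<close> S_desc] maj_lub_unique by blast
  moreover have "\<forall>k\<in>{1..N}. \<exists>b. onb N b \<and> (\<forall>y. onb N y \<longrightarrow>
      sum_list (take k (pcond N \<rho> x y)) \<le> sum_list (take k (pcond N \<rho> x b)))"
    by (metis atLeastAtMost_iff sum_take_pcond_maximizer)
  then have "\<exists>B. \<forall>k\<in>{1..N}. onb N (B k) \<and> (\<forall>y. onb N y \<longrightarrow>
      sum_list (take k (pcond N \<rho> x y)) \<le> sum_list (take k (pcond N \<rho> x (B k))))"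
    by (rule bchoice)
  moreover have "s = foldl (maj_join N) (pcond N \<rho> x (B 1)) (map (\<lambda>k. pcond N \<rho> x (B k)) [2..<N+1])"
    if B: "\<forall>k\<in>{1..N}. onb N (B k) \<and> (\<forall>y. onb N y \<longrightarrow>
      sum_list (take k (pcond N \<rho> x y)) \<le> sum_list (take k (pcond N \<rho> x (B k))))"
      and "maj_lub N S s" for B s
  proof (rule maj_lub_eq_foldl_maj_join[where b = "\<lambda>k. pcond N \<rho> x (B k)", OF \<open>maj_lub N S s\<close> S_desc assms(1)])
    show "pcond N \<rho> x (B k) \<in> S" if "k \<in> {1..N}" for k
      using B that by (auto simp: S_def)
    show "sum_list (take k a) \<le> sum_list (take k (pcond N \<rho> x (B k)))" if "a \<in> S" and "k \<in> {1..N}" for a k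
      using B that by (auto simp: S_def)
  qed
  ultimately show ?thesis unfolding S_def by blast
qed

end
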